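(* Let $\vartheta$ be a primitive random substitution. If $X_\vartheta$ contains a periodic element (some $x$ with $\sigma^n(x)=x$ for some $n\ge1$), then $\operatorname{Aut}(X_\vartheta)$ is residually finite.
   Context: A random substitution on a finite alphabet $\mathcal A$ is a map $\vartheta$ from $\mathcal A$ to non-empty finite sets of non-empty words, extended to words by concatenating choices and iterated. Legal words are subwords of words in some $\vartheta^p(a)$; $X_\vartheta\subseteq\mathcal A^{\mathbb Z}$ is the set of sequences all of whose subwords are legal, with shift $\sigma(x)_i=x_{i+1}$; $\operatorname{Aut}(X_\vartheta)$ is the group of shift-commuting homeomorphisms of $X_\vartheta$. $\vartheta$ is primitive if for some $p\ge1$ every letter occurs in some word of $\vartheta^p(b)$ for every $b\in\mathcal A$. *)

theory Defs
  imports "HOL-Analysis.Function_Topology" "HOL-Algebra.Coset" "HOL-Library.Sublist"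
begin

definition random_subst :: "('a \<Rightarrow> 'a list set) \<Rightarrow> bool" where
  "random_subst \<theta> \<longleftrightarrow> (\<forall>a. \<theta> a \<noteq> {} \<and> finite (\<theta> a) \<and> (\<forall>w\<in>\<theta> a. w \<noteq> []))"

fun subst_word :: "('a \<Rightarrow> 'a list set) \<Rightarrow> 'a list \<Rightarrow> 'a list set" where
  "subst_word \<theta> [] = {[]}"
| "subst_word \<theta> (a # u) = {v @ w | v w. v \<in> \<theta> a \<and> w \<in> subst_word \<theta> u}"

fun subst_pow :: "('a \<Rightarrow> 'a list set) \<Rightarrow> nat \<Rightarrow> 'a \<Rightarrow> 'a list set" where
  "subst_pow \<theta> 0 a = {[a]}"
| "subst_pow \<theta> (Suc p) a = \<Union> (subst_word \<theta> ` subst_pow \<theta> p a)"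

definition primitive_subst :: "('a \<Rightarrow> 'a list set) \<Rightarrow> bool" where
  "primitive_subst \<theta> \<longleftrightarrow> (\<exists>p\<ge>1. \<forall>a b. \<exists>w\<in>subst_pow \<theta> p b. a \<in> set w)"

definition legal :: "('a \<Rightarrow> 'a list set) \<Rightarrow> 'a list \<Rightarrow> bool" where
  "legal \<theta> u \<longleftrightarrow> (\<exists>a p w. w \<in> subst_pow \<theta> p a \<and> sublist u w)"

definition subshift :: "('a \<Rightarrow> 'a list set) \<Rightarrow> (int \<Rightarrow> 'a) set" where
  "subshift \<theta> = {x. \<forall>(i::int) (n::nat). legal \<theta> (map (\<lambda>k. x (i + int k)) [0..<n])}"

definition shift :: "(int \<Rightarrow> 'a) \<Rightarrow> (int \<Rightarrow> 'a)" where
  "shift x = (\<lambda>i. x (i + 1))"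

definition fullshift_top :: "(int \<Rightarrow> 'a) topology" where
  "fullshift_top = product_topology (\<lambda>_. discrete_topology UNIV) UNIV"

definition automs :: "(int \<Rightarrow> 'a) set \<Rightarrow> ((int \<Rightarrow> 'a) \<Rightarrow> (int \<Rightarrow> 'a)) set" where
  "automs X = {f. homeomorphic_map (subtopology fullshift_top X) (subtopology fullshift_top X) f
                 \<and> (\<forall>x\<in>X. f (shift x) = shift (f x)) \<and> f \<in> extensional X}"

definition Aut_group :: "(int \<Rightarrow> 'a) set \<Rightarrow> ((int \<Rightarrow> 'a) \<Rightarrow> (int \<Rightarrow> 'a)) monoid" where
  "Aut_group X = \<lparr>carrier = automs X, mult = (\<lambda>f g. restrict (f \<circ> g) X), one = restrict id X\<rparr>"

definition residually_finite :: "('g, 'b) monoid_scheme \<Rightarrow> bool" where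
  "residually_finite G \<longleftrightarrow>
     (\<forall>g\<in>carrier G. g \<noteq> \<one>\<^bsub>G\<^esub> \<longrightarrow> (\<exists>N. N \<lhd> G \<and> finite (rcosets\<^bsub>G\<^esub> N) \<and> g \<notin> N))"

end

theory Submission
  imports Defs "HOL-Algebra.Bij"
begin

text \<open>
  An automorphism g \<noteq> id moves some point x, and by continuity g moves every point that agrees
  with x on a large enough window. Periodic points of X_\<theta> are dense once there is one:
  realising \<theta>^m letter by letter on a period block w yields a block whose powers are still legal,
  and by primitivity the realisation of the first letter of w can be chosen to contain any given
  legal word. Hence g moves a point of some period n. Every automorphism permutes the finitely many
  points of period n, and the kernel of this action is a normal subgroup of finite index not
  containing g.
\<close>

section \<open>Residual finiteness from finite quotients\<close>

lemma (in group_hom) finite_rcosets_kernel: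
  assumes "finite (carrier H)"
  shows "finite (rcosets\<^bsub>G\<^esub> (kernel G H h))"
proof -
  have "(\<lambda>X. the_elem (h ` X)) ` carrier (G Mod kernel G H h) \<subseteq> carrier H"
    using FactGroup_the_elem_mem by blast
  then have "finite (carrier (G Mod kernel G H h))"
    using FactGroup_inj_on assms finite_imageD finite_subset by blast
  then show ?thesis
    by (simp add: FactGroup_def)
qed

lemma residually_finiteI:
  fixes G :: "('g, 'm) monoid_scheme"
  assumes "group G"
    and "\<And>g. g \<in> carrier G \<Longrightarrow> g \<noteq> \<one>\<^bsub>G\<^esub> \<Longrightarrow>
      \<exists>(H :: ('h, 'n) monoid_scheme) h. group H \<and> finite (carrier H) \<and> h \<in> hom G H \<and> h g \<noteq> \<one>\<^bsub>H\<^esub>"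
  shows "residually_finite G"
  unfolding residually_finite_def
proof (intro ballI impI)
  fix g assume "g \<in> carrier G" "g \<noteq> \<one>\<^bsub>G\<^esub>"
  then obtain H :: "('h, 'n) monoid_scheme" and h
    where "group H" "finite (carrier H)" "h \<in> hom G H" "h g \<noteq> \<one>\<^bsub>H\<^esub>"
    using assms(2) by blast
  then interpret group_hom G H h
    using assms(1) by (simp add: group_hom_def group_hom_axioms_def)
  show "\<exists>N. N \<lhd> G \<and> finite (rcosets\<^bsub>G\<^esub> N) \<and> g \<notin> N"
    using normal_kernel finite_rcosets_kernel \<open>finite (carrier H)\<close> \<open>h g \<noteq> \<one>\<^bsub>H\<^esub>\<close>
    by (auto simp: kernel_def)
qed

lemma finite_Bij: "finite S \<Longrightarrow> finite (Bij S)"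
  by (rule finite_subset[of _ "S \<rightarrow>\<^sub>E S"])
    (auto simp: Bij_def PiE_iff bij_betw_apply finite_PiE extensional_def)

section \<open>Automorphisms of subshifts with dense periodic points\<close>

lemma topspace_fullshift_top [simp]: "topspace fullshift_top = UNIV"
  by (simp add: fullshift_top_def)

lemma automsD:
  assumes "f \<in> automs X"
  shows "homeomorphic_map (subtopology fullshift_top X) (subtopology fullshift_top X) f"
    and "\<And>x. x \<in> X \<Longrightarrow> f (shift x) = shift (f x)"
    and "f \<in> extensional X"
    and "f ` X = X"
    and "inj_on f X"
proof -
  show hom: "homeomorphic_map (subtopology fullshift_top X) (subtopology fullshift_top X) f"
    and "\<And>x. x \<in> X \<Longrightarrow> f (shift x) = shift (f x)" "f \<in> extensional X"
    using assms unfolding automs_def by blast+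
  show "f ` X = X" "inj_on f X"
    using homeomorphic_imp_surjective_map[OF hom] homeomorphic_imp_injective_map[OF hom] by simp_all
qed

lemma automs_mem: "f \<in> automs X \<Longrightarrow> x \<in> X \<Longrightarrow> f x \<in> X"
  using automsD(4) by blast

lemma Aut_group_simps [simp]:
  "carrier (Aut_group X) = automs X"
  "mult (Aut_group X) f g = restrict (f \<circ> g) X"
  "one (Aut_group X) = restrict id X"
  by (simp_all add: Aut_group_def)

lemma restrict_in_automsI:
  assumes "homeomorphic_map (subtopology fullshift_top X) (subtopology fullshift_top X) f"
    and "\<And>x. x \<in> X \<Longrightarrow> f (shift x) = shift (f x)"
    and "shift ` X \<subseteq> X"
  shows "restrict f X \<in> automs X"
proof -
  have "homeomorphic_map (subtopology fullshift_top X) (subtopology fullshift_top X) (restrict f X)"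
    using assms(1) by (rule homeomorphic_map_eq) simp
  then show ?thesis
    using assms(2,3) unfolding automs_def by auto
qed

lemma restrict_comp_in_automs:
  assumes "shift ` X \<subseteq> X" "f \<in> automs X" "g \<in> automs X"
  shows "restrict (f \<circ> g) X \<in> automs X"
proof (rule restrict_in_automsI[OF _ _ assms(1)])
  show "homeomorphic_map (subtopology fullshift_top X) (subtopology fullshift_top X) (f \<circ> g)"
    using automsD(1)[OF assms(2)] automsD(1)[OF assms(3)] homeomorphic_map_compose by blast
  show "(f \<circ> g) (shift x) = shift ((f \<circ> g) x)" if "x \<in> X" for x
    using that automsD(2)[OF assms(2)] automsD(2)[OF assms(3)] automs_mem[OF assms(3)] by simp
qed

lemma restrict_id_in_automs: "shift ` X \<subseteq> X \<Longrightarrow> restrict id X \<in> automs X"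
  by (rule restrict_in_automsI) (simp_all add: homeomorphic_map_id)

lemma automs_left_inverse:
  assumes "shift ` X \<subseteq> X" "f \<in> automs X"
  shows "\<exists>g \<in> automs X. restrict (g \<circ> f) X = restrict id X"
proof -
  obtain g where "homeomorphic_maps (subtopology fullshift_top X) (subtopology fullshift_top X) f g"
    using automsD(1)[OF assms(2)] homeomorphic_map_maps by blast
  then have g: "homeomorphic_map (subtopology fullshift_top X) (subtopology fullshift_top X) g"
    and gf: "\<And>x. x \<in> X \<Longrightarrow> g (f x) = x" and fg: "\<And>x. x \<in> X \<Longrightarrow> f (g x) = x"
    unfolding homeomorphic_maps_map by auto
  have gX: "g x \<in> X" if "x \<in> X" for x
    using homeomorphic_imp_surjective_map[OF g] that by auto
  have "g (shift x) = shift (g x)" if "x \<in> X" for x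
  proof -
    have "f (shift (g x)) = shift x"
      using automsD(2)[OF assms(2)] gX fg that by simp
    then show ?thesis
      using gf[of "shift (g x)"] assms(1) gX that by auto
  qed
  then have "restrict g X \<in> automs X"
    using g assms(1) by (rule_tac restrict_in_automsI) auto
  moreover have "restrict (restrict g X \<circ> f) X = restrict id X"
    using gf automsD(4)[OF assms(2)] by (auto simp: fun_eq_iff)
  ultimately show ?thesis by blast
qed

lemma group_Aut_group:
  assumes "shift ` X \<subseteq> X"
  shows "group (Aut_group X)"
proof (rule groupI)
  fix f g h
  assume "f \<in> carrier (Aut_group X)" "g \<in> carrier (Aut_group X)" "h \<in> carrier (Aut_group X)"
  then show "f \<otimes>\<^bsub>Aut_group X\<^esub> g \<in> carrier (Aut_group X)"
    and "f \<otimes>\<^bsub>Aut_group X\<^esub> g \<otimes>\<^bsub>Aut_group X\<^esub> h = f \<otimes>\<^bsub>Aut_group X\<^esub> (g \<otimes>\<^bsub>Aut_group X\<^esub> h)"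
    using restrict_comp_in_automs[OF assms] automs_mem[of h X] by (auto simp: fun_eq_iff)
next
  show "\<one>\<^bsub>Aut_group X\<^esub> \<in> carrier (Aut_group X)"
    using restrict_id_in_automs[OF assms] by simp
next
  fix f assume f: "f \<in> carrier (Aut_group X)"
  then show "\<one>\<^bsub>Aut_group X\<^esub> \<otimes>\<^bsub>Aut_group X\<^esub> f = f"
    using automs_mem[of f X] automsD(3)[of f X] by (auto simp: fun_eq_iff extensional_def)
  show "\<exists>g\<in>carrier (Aut_group X). g \<otimes>\<^bsub>Aut_group X\<^esub> f = \<one>\<^bsub>Aut_group X\<^esub>"
    using automs_left_inverse[OF assms] f by simp
qed

lemma restrict_in_hom_BijGroup:
  assumes "P \<subseteq> X" "finite P" and invariant: "\<And>f y. f \<in> automs X \<Longrightarrow> y \<in> P \<Longrightarrow> f y \<in> P"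
  shows "(\<lambda>f. restrict f P) \<in> hom (Aut_group X) (BijGroup P)"
proof -
  have Bij: "restrict f P \<in> Bij P" if f: "f \<in> automs X" for f
  proof -
    have "inj_on f P"
      using automsD(5)[OF f] assms(1) by (rule inj_on_subset)
    moreover from this have "f ` P = P"
      using invariant[OF f] assms(2) by (intro endo_inj_surj) auto
    ultimately show ?thesis
      by (simp add: Bij_def bij_betw_def)
  qed
  show ?thesis
  proof (rule homI)
    fix f g assume "f \<in> carrier (Aut_group X)" "g \<in> carrier (Aut_group X)"
    then show "restrict f P \<in> carrier (BijGroup P)"
      and "restrict (f \<otimes>\<^bsub>Aut_group X\<^esub> g) P = restrict f P \<otimes>\<^bsub>BijGroup P\<^esub> restrict g P"
      using Bij invariant assms(1) by (auto simp: BijGroup_def compose_def fun_eq_iff)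
  qed
qed

definition word_at :: "(int \<Rightarrow> 'a) \<Rightarrow> int \<Rightarrow> nat \<Rightarrow> 'a list" where
  "word_at x i n = map (\<lambda>k. x (i + int k)) [0..<n]"

lemma length_word_at [simp]: "length (word_at x i n) = n"
  by (simp add: word_at_def)

lemma word_at_eq_Nil_iff [simp]: "word_at x i n = [] \<longleftrightarrow> n = 0"
  by (simp add: word_at_def)

lemma nth_word_at [simp]: "k < n \<Longrightarrow> word_at x i n ! k = x (i + int k)"
  by (simp add: word_at_def)

lemma word_at_add: "word_at x i (m + n) = word_at x i m @ word_at x (i + int m) n"
  by (rule nth_equalityI) (auto simp: nth_append algebra_simps)

lemma take_drop_word_at:
  assumes "j + n \<le> m"
  shows "take n (drop j (word_at x i m)) = word_at x (i + int j) n"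
  using assms by (intro nth_equalityI) (auto simp: algebra_simps)

lemma sublist_word_at:
  assumes "j + n \<le> m"
  shows "sublist (word_at x (i + int j) n) (word_at x i m)"
proof -
  have "word_at x i m = word_at x i j @ word_at x (i + int j) n @ word_at x (i + int (j + n)) (m - (j + n))"
    using word_at_add[of x i j n] word_at_add[of x i "j + n" "m - (j + n)"] assms by simp
  then show ?thesis
    by (metis sublist_appendI)
qed

lemma word_at_eqD:
  assumes "word_at x i n = word_at y i n" "i \<le> j" "j < i + int n"
  shows "x j = y j"
proof -
  have "nat (j - i) < n" "i + int (nat (j - i)) = j"
    using assms(2,3) by auto
  then show ?thesis
    using arg_cong[OF assms(1), of "\<lambda>w. w ! nat (j - i)"] by simp
qed

lemma shift_pow_apply [simp]: "(shift ^^ n) x i = x (i + int n)"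
  by (induction n arbitrary: i) (auto simp: shift_def algebra_simps)

lemma periodic_add_mult:
  assumes "(shift ^^ n) x = x"
  shows "x (i + int n * k) = x i"
proof -
  have nat: "x (j + int n * int m) = x j" for j m
  proof (induction m)
    case (Suc m)
    have "x (j + int n * int (Suc m)) = (shift ^^ n) x (j + int n * int m)"
      by (simp add: algebra_simps)
    then show ?case
      using Suc assms by simp
  qed simp
  show ?thesis
  proof (cases "k \<ge> 0")
    case True
    then show ?thesis
      using nat[of i "nat k"] by simp
  next
    case False
    then show ?thesis
      using nat[of "i + int n * k" "nat (- k)"] by (simp add: algebra_simps)
  qed
qed

lemma word_at_periodic:
  assumes "(shift ^^ n) x = x"
  shows "word_at x i (k * n) = concat (replicate k (word_at x i n))"
proof (induction k)
  case (Suc k)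
  have "x (i + int n + int j) = x (i + int j)" for j
    using fun_cong[OF assms, of "i + int j"] by (simp add: algebra_simps)
  then have "word_at x (i + int n) m = word_at x i m" for m
    by (simp add: word_at_def)
  then show ?case
    using Suc word_at_add[of x i n "k * n"] by simp
qed (simp add: word_at_def)

lemma finite_periodic_points:
  assumes "n \<ge> 1"
  shows "finite {y :: int \<Rightarrow> 'a::finite. (shift ^^ n) y = y}"
proof -
  let ?P = "{y :: int \<Rightarrow> 'a. (shift ^^ n) y = y}"
  have inj: "inj_on (\<lambda>y. word_at y 0 n) ?P"
  proof
    fix y y' assume "y \<in> ?P" "y' \<in> ?P" and eq: "word_at y 0 n = word_at y' 0 n"
    then have periodic: "(shift ^^ n) y = y" "(shift ^^ n) y' = y'"
      by (simp_all only: mem_Collect_eq)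
    show "y = y'"
    proof
      fix j :: int
      have reduce: "v j = v (j mod int n)" if "(shift ^^ n) v = v" for v :: "int \<Rightarrow> 'a"
        using periodic_add_mult[OF that, of "j mod int n" "j div int n"] by (simp add: mod_mult_div_eq)
      have "y (j mod int n) = y' (j mod int n)"
        by (rule word_at_eqD[OF eq]) (use assms in auto)
      then show "y j = y' j"
        using reduce[OF periodic(1)] reduce[OF periodic(2)] by argo
    qed
  qed
  have "finite ((\<lambda>y. word_at y 0 n) ` ?P)"
    by (rule finite_subset[OF _ finite_lists_length_eq[of "UNIV :: 'a set" n]]) auto
  then show ?thesis
    using inj by (rule finite_imageD)
qed

lemma automs_commute_shift_pow:
  assumes "shift ` X \<subseteq> X" "f \<in> automs X" "y \<in> X"
  shows "f ((shift ^^ n) y) = (shift ^^ n) (f y)"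
proof (induction n)
  case (Suc n)
  have "(shift ^^ n) y \<in> X"
    using assms(1,3) by (induction n) auto
  then show ?case
    using Suc automsD(2)[OF assms(2)] by (simp del: shift_pow_apply)
qed simp

lemma continuous_map_fullshift_coordinate:
  assumes "continuous_map (subtopology fullshift_top X) fullshift_top f" "x \<in> X"
  shows "\<exists>N::nat. \<forall>y\<in>X. (\<forall>j. \<bar>j\<bar> \<le> int N \<longrightarrow> y j = x j) \<longrightarrow> f y i = f x i"
proof -
  have "continuous_map (subtopology fullshift_top X) (discrete_topology UNIV) (\<lambda>y. f y i)"
    using assms(1) unfolding fullshift_top_def continuous_map_componentwise_UNIV by blast
  then have "openin (subtopology fullshift_top X)
      {y \<in> topspace (subtopology fullshift_top X). f y i \<in> {f x i}}"
    by (rule openin_continuous_map_preimage) simp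
  then obtain T where T: "openin fullshift_top T" and TX: "{y \<in> X. f y i = f x i} = T \<inter> X"
    unfolding openin_subtopology by auto
  have "x \<in> T"
    using TX assms(2) by blast
  then obtain U where U: "finite {j \<in> UNIV. U j \<noteq> topspace (discrete_topology UNIV)}"
    "x \<in> Pi\<^sub>E UNIV U" "Pi\<^sub>E UNIV U \<subseteq> T"
    using T unfolding fullshift_top_def openin_product_topology_alt by blast
  define J where "J = {j. U j \<noteq> UNIV}"
  define N where "N = Max (insert 0 (nat ` abs ` J))"
  have "y \<in> T" if agree: "\<forall>j. \<bar>j\<bar> \<le> int N \<longrightarrow> y j = x j" for y
  proof -
    have "y j \<in> U j" for j
    proof (cases "j \<in> J")
      case True
      then have "nat \<bar>j\<bar> \<le> N"
        unfolding N_def using U(1) by (intro Max_ge) (auto simp: J_def)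
      then show ?thesis
        using agree U(2) by auto
    qed (simp add: J_def)
    then show ?thesis
      using U(3) by auto
  qed
  then show ?thesis
    using TX by blast
qed

definition dense_periodic_points :: "(int \<Rightarrow> 'a) set \<Rightarrow> bool" where
  "dense_periodic_points X \<longleftrightarrow>
     (\<forall>x\<in>X. \<forall>M::nat. \<exists>z\<in>X. \<exists>n\<ge>1. (shift ^^ n) z = z \<and> (\<forall>j. \<bar>j\<bar> \<le> int M \<longrightarrow> z j = x j))"

lemma automs_moves_periodic_point:
  assumes "dense_periodic_points X" "f \<in> automs X" "x \<in> X" "f x \<noteq> x"
  shows "\<exists>z\<in>X. \<exists>n\<ge>1. (shift ^^ n) z = z \<and> f z \<noteq> z"
proof -
  obtain i where i: "f x i \<noteq> x i"
    using assms(4) by auto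
  have "continuous_map (subtopology fullshift_top X) fullshift_top f"
    using homeomorphic_imp_continuous_map[OF automsD(1)[OF assms(2)]] continuous_map_in_subtopology by blast
  then obtain N where N: "\<And>y. y \<in> X \<Longrightarrow> \<forall>j. \<bar>j\<bar> \<le> int N \<longrightarrow> y j = x j \<Longrightarrow> f y i = f x i"
    using continuous_map_fullshift_coordinate assms(3) by blast
  obtain z n where z: "z \<in> X" "n \<ge> 1" "(shift ^^ n) z = z"
    and agree: "\<forall>j. \<bar>j\<bar> \<le> int (max N (nat \<bar>i\<bar>)) \<longrightarrow> z j = x j"
    using assms(1,3) unfolding dense_periodic_points_def by blast
  have "f z i = f x i" "z i = x i"
    using N[OF z(1)] agree by auto
  then show ?thesis
    using z i by metis
qed

theorem residually_finite_Aut_group: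
  fixes X :: "(int \<Rightarrow> 'a::finite) set"
  assumes "shift ` X \<subseteq> X" "dense_periodic_points X"
  shows "residually_finite (Aut_group X)"
proof (rule residually_finiteI)
  show "group (Aut_group X)"
    using assms(1) by (rule group_Aut_group)
  fix g assume g: "g \<in> carrier (Aut_group X)" "g \<noteq> \<one>\<^bsub>Aut_group X\<^esub>"
  have "\<exists>x\<in>X. g x \<noteq> x"
  proof (rule ccontr)
    assume "\<not> (\<exists>x\<in>X. g x \<noteq> x)"
    then have "g = restrict id X"
      using automsD(3)[of g X] g(1) by (intro extensionalityI[where A = X]) auto
    then show False
      using g(2) by simp
  qed
  then obtain z n where z: "z \<in> X" "n \<ge> 1" "(shift ^^ n) z = z" "g z \<noteq> z"
    using automs_moves_periodic_point[OF assms(2), of g] g(1) by (simp only: Aut_group_simps) blast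
  define P where "P = {y \<in> X. (shift ^^ n) y = y}"
  have "finite P"
    using finite_periodic_points[OF z(2), where 'a='a] by (rule finite_subset[rotated]) (auto simp: P_def)
  moreover have "f y \<in> P" if "f \<in> automs X" "y \<in> P" for f y
    using that automs_commute_shift_pow[OF assms(1), of f y n] automs_mem[of f X y] by (auto simp: P_def)
  ultimately have "(\<lambda>f. restrict f P) \<in> hom (Aut_group X) (BijGroup P)"
    by (intro restrict_in_hom_BijGroup) (auto simp: P_def)
  moreover have "restrict g P \<noteq> \<one>\<^bsub>BijGroup P\<^esub>"
    using z by (auto simp: BijGroup_def P_def fun_eq_iff)
  ultimately show "\<exists>(H :: ((int \<Rightarrow> 'a) \<Rightarrow> int \<Rightarrow> 'a) monoid) h.
      group H \<and> finite (carrier H) \<and> h \<in> hom (Aut_group X) H \<and> h g \<noteq> \<one>\<^bsub>H\<^esub>"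
    using group_BijGroup finite_Bij[OF \<open>finite P\<close>] by (metis partial_object.select_convs(1) BijGroup_def)
qed

section \<open>Periodic points of random substitution subshifts\<close>

fun subst_word_pow :: "('a \<Rightarrow> 'a list set) \<Rightarrow> nat \<Rightarrow> 'a list \<Rightarrow> 'a list set" where
  "subst_word_pow \<theta> 0 w = {w}"
| "subst_word_pow \<theta> (Suc q) w = \<Union> (subst_word \<theta> ` subst_word_pow \<theta> q w)"

lemma subst_pow_eq_subst_word_pow: "subst_pow \<theta> q a = subst_word_pow \<theta> q [a]"
  by (induction q) auto

lemma subst_word_append:
  "u' \<in> subst_word \<theta> u \<Longrightarrow> v' \<in> subst_word \<theta> v \<Longrightarrow> u' @ v' \<in> subst_word \<theta> (u @ v)"
proof (induction u arbitrary: u')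
  case (Cons a u)
  then obtain p r where "u' = p @ r" "p \<in> \<theta> a" "r \<in> subst_word \<theta> u"
    by auto
  then show ?case
    using Cons.IH[of r] Cons.prems(2) by force
qed simp

lemma subst_word_pow_append:
  "u' \<in> subst_word_pow \<theta> q u \<Longrightarrow> v' \<in> subst_word_pow \<theta> q v \<Longrightarrow> u' @ v' \<in> subst_word_pow \<theta> q (u @ v)"
proof (induction q arbitrary: u' v')
  case (Suc q)
  then obtain u1 v1 where "u1 \<in> subst_word_pow \<theta> q u" "u' \<in> subst_word \<theta> u1"
    and "v1 \<in> subst_word_pow \<theta> q v" "v' \<in> subst_word \<theta> v1"
    by auto
  then show ?case
    using Suc.IH[of u1 v1] subst_word_append[of u' \<theta> u1 v' v1] by auto
qed simp

lemma subst_word_pow_add: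
  "v \<in> subst_word_pow \<theta> p u \<Longrightarrow> w \<in> subst_word_pow \<theta> q v \<Longrightarrow> w \<in> subst_word_pow \<theta> (p + q) u"
proof (induction q arbitrary: w)
  case (Suc q)
  then obtain w' where "w' \<in> subst_word_pow \<theta> q v" "w \<in> subst_word \<theta> w'"
    by auto
  then show ?case
    using Suc.IH[of w'] Suc.prems(1) by auto
qed simp

lemma subst_word_nonempty: "random_subst \<theta> \<Longrightarrow> subst_word \<theta> w \<noteq> {}"
proof (induction w)
  case (Cons a w)
  then obtain r p where "r \<in> subst_word \<theta> w" "p \<in> \<theta> a"
    unfolding random_subst_def by blast
  then show ?case
    by auto
qed simp

lemma subst_word_pow_nonempty: "random_subst \<theta> \<Longrightarrow> subst_word_pow \<theta> q w \<noteq> {}"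
  by (induction q) (auto dest: subst_word_nonempty)

lemma concat_map_in_subst_word_pow:
  assumes "\<And>c. ch c \<in> subst_word_pow \<theta> m [c]"
  shows "concat (map ch w) \<in> subst_word_pow \<theta> m w"
proof (induction w)
  case Nil
  have "[] \<in> subst_word_pow \<theta> m []"
    by (induction m) force+
  then show ?case
    by simp
next
  case (Cons c w)
  then show ?case
    using subst_word_pow_append[OF assms[of c] Cons.IH] by simp
qed

lemma legal_sublist: "legal \<theta> w \<Longrightarrow> sublist v w \<Longrightarrow> legal \<theta> v"
  unfolding legal_def by (meson sublist_order.order_trans)

lemma legal_concat_map:
  assumes "\<And>c. ch c \<in> subst_word_pow \<theta> m [c]" and "legal \<theta> u"
  shows "legal \<theta> (concat (map ch u))"
proof -
  obtain a r w where w: "w \<in> subst_word_pow \<theta> r [a]" "sublist u w"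
    using assms(2) unfolding legal_def subst_pow_eq_subst_word_pow by blast
  then obtain s t where "w = s @ u @ t"
    unfolding sublist_def by blast
  then have "sublist (concat (map ch u)) (concat (map ch w))"
    by simp
  moreover have "concat (map ch w) \<in> subst_word_pow \<theta> (r + m) [a]"
    using subst_word_pow_add[OF w(1) concat_map_in_subst_word_pow[OF assms(1)]] .
  ultimately show ?thesis
    unfolding legal_def subst_pow_eq_subst_word_pow by blast
qed

lemma legal_imp_sublist_subst_word_pow:
  assumes "random_subst \<theta>" "primitive_subst \<theta>" "legal \<theta> u"
  shows "\<exists>m v. v \<in> subst_word_pow \<theta> m [b] \<and> sublist u v"
proof -
  obtain a q w where w: "w \<in> subst_word_pow \<theta> q [a]" "sublist u w"
    using assms(3) unfolding legal_def subst_pow_eq_subst_word_pow by blast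
  obtain p where "\<forall>a b. \<exists>w\<in>subst_word_pow \<theta> p [b]. a \<in> set w"
    using assms(2) unfolding primitive_subst_def subst_pow_eq_subst_word_pow by blast
  then obtain s t where st: "s @ [a] @ t \<in> subst_word_pow \<theta> p [b]"
    by (metis split_list append_Cons append_Nil)
  obtain s' t' where "s' \<in> subst_word_pow \<theta> q s" "t' \<in> subst_word_pow \<theta> q t"
    using subst_word_pow_nonempty[OF assms(1)] by blast
  then have "s' @ w @ t' \<in> subst_word_pow \<theta> (p + q) [b]"
    using subst_word_pow_add[OF st] subst_word_pow_append w(1) by blast
  moreover have "sublist u (s' @ w @ t')"
    using w(2) by (meson sublist_appendI sublist_order.order_trans)
  ultimately show ?thesis
    by blast
qed

lemma ex_block_with_legal_powers:
  assumes "random_subst \<theta>" "primitive_subst \<theta>"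
    and "w \<noteq> []" "\<And>k. legal \<theta> (concat (replicate k w))" "legal \<theta> u"
  shows "\<exists>V. sublist u V \<and> (\<forall>k. legal \<theta> (concat (replicate k V)))"
proof -
  obtain m V0 where V0: "V0 \<in> subst_word_pow \<theta> m [hd w]" "sublist u V0"
    using legal_imp_sublist_subst_word_pow[OF assms(1,2,5)] by blast
  \<comment> \<open>One realisation per letter, so that the image of w^k is V^k.\<close>
  define ch where "ch c = (if c = hd w then V0 else (SOME v. v \<in> subst_word_pow \<theta> m [c]))" for c
  have ch: "ch c \<in> subst_word_pow \<theta> m [c]" for c
    using V0(1) subst_word_pow_nonempty[OF assms(1), of m "[c]"] some_in_eq by (auto simp: ch_def)
  define V where "V = concat (map ch w)"
  have "concat (replicate k V) = concat (map ch (concat (replicate k w)))" for k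
    by (induction k) (simp_all add: V_def)
  then have "legal \<theta> (concat (replicate k V))" for k
    using legal_concat_map[OF ch assms(4)] by simp
  moreover have "V = V0 @ concat (map ch (tl w))"
    using assms(3) by (cases w) (simp_all add: V_def ch_def)
  then have "sublist u V"
    using V0(2) by (metis sublist_append_rightI sublist_order.order_trans)
  ultimately show ?thesis
    by blast
qed

lemma mem_subshift_iff: "x \<in> subshift \<theta> \<longleftrightarrow> (\<forall>i n. legal \<theta> (word_at x i n))"
  by (simp add: subshift_def word_at_def)

lemma shift_subshift: "shift ` subshift \<theta> \<subseteq> subshift \<theta>"
proof -
  have "word_at (shift x) i n = word_at x (i + 1) n" for x :: "int \<Rightarrow> 'a" and i n
    by (simp add: word_at_def shift_def algebra_simps)
  then show ?thesis
    by (auto simp: mem_subshift_iff)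
qed

definition periodic_seq :: "'a list \<Rightarrow> int \<Rightarrow> int \<Rightarrow> 'a" where
  "periodic_seq V i0 i = V ! nat ((i - i0) mod int (length V))"

lemma shift_pow_periodic_seq: "(shift ^^ length V) (periodic_seq V i0) = periodic_seq V i0"
  by (rule ext) (simp add: periodic_seq_def diff_add_eq[symmetric])

lemma word_at_periodic_seq: "word_at (periodic_seq V i0) i0 (length V) = V"
  by (rule nth_equalityI) (simp_all add: periodic_seq_def)

lemma periodic_mem_subshift:
  assumes "(shift ^^ L) z = z" "L \<ge> 1" and legal: "\<And>k. legal \<theta> (concat (replicate k (word_at z i0 L)))"
  shows "z \<in> subshift \<theta>"
  unfolding mem_subshift_iff
proof (intro allI)
  fix i n
  define r where "r = nat ((i - i0) mod int L)"
  define q where "q = (i - i0) div int L"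
  have i: "i = i0 + int r + int L * q"
    using assms(2) by (simp add: r_def q_def)
  have "z (i + int k) = z (i0 + int r + int k)" for k
    using periodic_add_mult[OF assms(1), of "i0 + int r + int k" q] i by (simp add: algebra_simps)
  then have "word_at z i n = word_at z (i0 + int r) n"
    by (simp add: word_at_def)
  moreover have "r + n \<le> (r + n) * L"
    using assms(2) by simp
  then have "sublist (word_at z (i0 + int r) n) (word_at z i0 ((r + n) * L))"
    by (rule sublist_word_at)
  ultimately show "legal \<theta> (word_at z i n)"
    using legal[of "r + n"] word_at_periodic[OF assms(1)] legal_sublist by metis
qed

lemma dense_periodic_points_subshift:
  assumes "random_subst \<theta>" "primitive_subst \<theta>" "\<exists>x\<in>subshift \<theta>. \<exists>n\<ge>1. (shift ^^ n) x = x"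
  shows "dense_periodic_points (subshift \<theta>)"
  unfolding dense_periodic_points_def
proof (intro ballI allI)
  fix x M assume x: "x \<in> subshift \<theta>"
  obtain x0 n0 where x0: "x0 \<in> subshift \<theta>" "n0 \<ge> 1" "(shift ^^ n0) x0 = x0"
    using assms(3) by blast
  define u where "u = word_at x (- int M) (2 * M + 1)"
  have "legal \<theta> (concat (replicate k (word_at x0 0 n0)))" for k
    using x0(1) unfolding mem_subshift_iff word_at_periodic[OF x0(3), symmetric] by blast
  moreover have "word_at x0 0 n0 \<noteq> []" "legal \<theta> u"
    using x0(2) x unfolding mem_subshift_iff u_def by auto
  ultimately obtain V where "sublist u V" and legal_V: "\<And>k. legal \<theta> (concat (replicate k V))"
    using ex_block_with_legal_powers[OF assms(1,2)] by blast
  then obtain s t where V: "V = s @ u @ t"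
    unfolding sublist_def by blast
  define z where "z = periodic_seq V (- int M - int (length s))"
  have L: "length V \<ge> 1"
    using V by (simp add: u_def)
  have periodic: "(shift ^^ length V) z = z"
    unfolding z_def by (rule shift_pow_periodic_seq)
  have block: "word_at z (- int M - int (length s)) (length V) = V"
    unfolding z_def by (rule word_at_periodic_seq)
  have "z \<in> subshift \<theta>"
    using periodic_mem_subshift[OF periodic L] block legal_V by metis
  have "length s + (2 * M + 1) \<le> length V"
    using V by (simp add: u_def)
  then have "word_at z (- int M) (2 * M + 1) = take (2 * M + 1) (drop (length s) V)"
    using take_drop_word_at[of "length s" "2 * M + 1" "length V" z "- int M - int (length s)"]
    by (simp add: block)
  also have "\<dots> = u"
    using V by (simp add: u_def)
  finally have "z j = x j" if "\<bar>j\<bar> \<le> int M" for j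
    using word_at_eqD[of z "- int M" "2 * M + 1" x j] that by (simp add: u_def)
  then show "\<exists>z\<in>subshift \<theta>. \<exists>n\<ge>1. (shift ^^ n) z = z \<and> (\<forall>j. \<bar>j\<bar> \<le> int M \<longrightarrow> z j = x j)"
    using \<open>z \<in> subshift \<theta>\<close> periodic L by blast
qed

theorem corollary6p1:
  fixes \<theta> :: "'a::finite \<Rightarrow> 'a list set"
  assumes "random_subst \<theta>"
    and "primitive_subst \<theta>"
    and "\<exists>x\<in>subshift \<theta>. \<exists>n\<ge>1. (shift ^^ n) x = x"
  shows "residually_finite (Aut_group (subshift \<theta>))"
  using shift_subshift dense_periodic_points_subshift[OF assms] by (rule residually_finite_Aut_group)

end
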